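(* Let $\kappa$ be a constancy measure. Then $\mathrm H^\kappa$ is an unbiased cooperative game mapping satisfying (Bound$_{CG}$), (Dic$_{CG}$), (Dum$_{CG}$) and (Type$_{CG}$). Moreover, for $\kappa=\kappa_{\mathrm{quad}}$, $\mathrm H^{\kappa}$ is chain-rule decomposable and satisfies (ModEC$_{CG}$).
   Context: $X$ is a fixed finite set of variables. An assignment over $U\subseteq X$ is a map $\mathbf u:U\to\{0,1\}$; for $\mathbf v$ over $V$, the cofactor is $f_{\mathbf v}(\mathbf u)=f(\mathbf v;\mathbf u_{X\setminus V})$ ($;$ concatenation, $\mathbf u_{S}$ restriction); $f_{x/c}$ for $V=\{x\}$. For $\mathbf u$ over $X$, $\mathbf u^{\oplus\{y\}}$ flips the value of $y$ and $f^{\oplus y}(\mathbf u)=f(\mathbf u^{\oplus\{y\}})$. $\mathbb B(X)$ is the set of Boolean functions $\{0,1\}^X\to\{0,1\}$, combined pointwise, $\overline f$ negation, a variable $x$ also denotes $\mathbf u\mapsto\mathbf u(x)$, $\ge$ pointwise. $\mathrm{dep}(f)=\{x:f_{x/1}\ne f_{x/0}\}$; $f$ monotone in $x$ if $f_{x/1}\ge f_{x/0}$. For a permutation $\sigma$ of $X$: $(\sigma\mathbf u)(x)=\mathbf u(\sigma^{-1}(x))$, $(\sigma f)(\mathbf u)=f(\sigma^{-1}\mathbf u)$. $f[x/s]=sf_{x/1}\lor\overline sf_{x/0}$. $\mathbb E$ is uniform expectation. Modularity: $f$ is modular in $g$ if $g$ is not constant and there are $\ell\in\mathbb B(X)$,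 $z\in X$ with $\mathrm{dep}(\ell)\cap\mathrm{dep}(g)=\emptyset$ and $f=\ell[z/g]$; monotonically modular if moreover $\ell$ is monotone in $z$. Then $f_{g/1}:=\ell_{z/1}$, $f_{g/0}:=\ell_{z/0}$, and $f[g/w]:=wf_{g/1}\lor\overline wf_{g/0}$. Cooperative games $v:2^X\to\mathbb R$, combined/compared pointwise; $\partial_xv(S)=v(S\cup\{x\})-v(S\setminus\{x\})$. A CGM is a map $f\mapsto\tau_f$ from $\mathbb B(X)$ to cooperative games. Properties, for all $x,y\in X$, permutations $\sigma$, $f,g,h$: (Bound$_{CG}$) $0\le\partial_x\tau_f\le1$; (Dum$_{CG}$) $\partial_x\tau_f=0$ if $x\notin\mathrm{dep}(f)$; (Dic$_{CG}$) $\partial_x\tau_x=\partial_x\tau_{\overline x}=1$; (Type$_{CG}$) $\tau_f(S)=\tau_{\sigma f}(\sigma(S))$ and $\tau_f(S)=\tau_{f^{\oplus y}}(S)$ for all $S$; (ModEC$_{CG}$) $\partial_x\tau_f\ge\partial_x\tau_h$ whenever $f,h$ are monotonically modular in $g$, $f_{g/1}\ge h_{g/1}$, $h_{g/0}\ge f_{g/0}$, $x\in\mathrm{dep}(g)$. $\tau$ is unbiased if $\tau_g=\tau_{\overline g}$; chain-rule decomposable if for all $f$ modular in $g$ and $x\in\mathrm{dep}(g)$: $\partial_x\tau_f=(\partial_x\tau_g)(\partial_{x_g}\tau_{f[g/x_g]})$ for a variable $x_g\notin\mathrm{dep}(f)$. A constancy measure is $\kappa:[0,1]\to[0,1]$ that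 is convex with $\kappa(0)=1$, $\kappa(a)=\kappa(1-a)$ and $\kappa(1/2)=0$; $\kappa_{\mathrm{quad}}(a)=4(a-1/2)^2$. The CGM $\mathrm H^\kappa$ is $\mathrm H^\kappa_f(S)=\mathbb E_{\mathbf a\in\{0,1\}^S}\big[\kappa(\mathbb E[f_{\mathbf a}])\big]$ (uniform over $\mathbf a$). *)

theory Defs
  imports "HOL-Analysis.Analysis"
begin

text \<open>Variables: elements of a finite type 'x (the fixed finite set X = UNIV).\<close>

type_synonym 'x bfun = "('x \<Rightarrow> bool) \<Rightarrow> bool"
type_synonym 'x game = "'x set \<Rightarrow> real"
type_synonym 'x cgm = "'x bfun \<Rightarrow> 'x game"

text \<open>Assignments over a set S of variables, represented extensionally
  (value False outside S), so they correspond bijectively to maps S \<rightarrow> {0,1}.\<close>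
definition assignments :: "'x set \<Rightarrow> ('x \<Rightarrow> bool) set" where
  "assignments S = {a. \<forall>x. x \<notin> S \<longrightarrow> a x = False}"

definition avg :: "'a set \<Rightarrow> ('a \<Rightarrow> real) \<Rightarrow> real" where
  "avg A h = (\<Sum>a\<in>A. h a) / real (card A)"

definition expect :: "('x::finite) bfun \<Rightarrow> real" where
  "expect f = avg UNIV (\<lambda>u. of_bool (f u))"

definition cofactor :: "'x bfun \<Rightarrow> 'x set \<Rightarrow> ('x \<Rightarrow> bool) \<Rightarrow> 'x bfun" where
  "cofactor f V v = (\<lambda>u. f (\<lambda>x. if x \<in> V then v x else u x))"

definition cof1 :: "'x bfun \<Rightarrow> 'x \<Rightarrow> bool \<Rightarrow> 'x bfun" where
  "cof1 f x c = (\<lambda>u. f (u(x := c)))"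

definition var :: "'x \<Rightarrow> 'x bfun" where
  "var x = (\<lambda>u. u x)"

definition dep :: "'x bfun \<Rightarrow> 'x set" where
  "dep f = {x. cof1 f x True \<noteq> cof1 f x False}"

definition monotone_in :: "'x bfun \<Rightarrow> 'x \<Rightarrow> bool" where
  "monotone_in f x \<longleftrightarrow> (\<forall>u. cof1 f x False u \<longrightarrow> cof1 f x True u)"

definition bge :: "'x bfun \<Rightarrow> 'x bfun \<Rightarrow> bool" where
  "bge f h \<longleftrightarrow> (\<forall>u. h u \<longrightarrow> f u)"

text \<open>Permutation action: (\<sigma> u)(x) = u(\<sigma>^{-1} x), (\<sigma> f)(u) = f(\<sigma>^{-1} u),
  so (\<sigma>^{-1} u)(x) = u(\<sigma> x).\<close>
definition perm_bfun :: "('x \<Rightarrow> 'x) \<Rightarrow> 'x bfun \<Rightarrow> 'x bfun" where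
  "perm_bfun \<sigma> f = (\<lambda>u. f (u \<circ> \<sigma>))"

definition flip_bfun :: "'x \<Rightarrow> 'x bfun \<Rightarrow> 'x bfun" where
  "flip_bfun y f = (\<lambda>u. f (u(y := \<not> u y)))"

definition subst :: "'x bfun \<Rightarrow> 'x \<Rightarrow> 'x bfun \<Rightarrow> 'x bfun" where
  "subst f x s = (\<lambda>u. (s u \<and> cof1 f x True u) \<or> (\<not> s u \<and> cof1 f x False u))"

definition nonconstant :: "'x bfun \<Rightarrow> bool" where
  "nonconstant g \<longleftrightarrow> (\<exists>u v. g u \<noteq> g v)"

text \<open>f is modular in g, witnessed by \<ell> and z:  g non-constant,
  dep \<ell> \<inter> dep g = {} and f = \<ell>[z/g].  Then f_{g/1} = \<ell>_{z/1}, f_{g/0} = \<ell>_{z/0}.\<close>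
definition modular_via :: "'x bfun \<Rightarrow> 'x bfun \<Rightarrow> 'x bfun \<Rightarrow> 'x \<Rightarrow> bool" where
  "modular_via f g l z \<longleftrightarrow> nonconstant g \<and> dep l \<inter> dep g = {} \<and> f = subst l z g"

definition modular :: "'x bfun \<Rightarrow> 'x bfun \<Rightarrow> bool" where
  "modular f g \<longleftrightarrow> (\<exists>l z. modular_via f g l z)"

definition mono_modular_via :: "'x bfun \<Rightarrow> 'x bfun \<Rightarrow> 'x bfun \<Rightarrow> 'x \<Rightarrow> bool" where
  "mono_modular_via f g l z \<longleftrightarrow> modular_via f g l z \<and> monotone_in l z"

text \<open>f[g/w] = w f_{g/1} \<or> \<not>w f_{g/0}, with f_{g/c} = \<ell>_{z/c} from the witness.\<close>
definition gsubst :: "'x bfun \<Rightarrow> 'x \<Rightarrow> 'x bfun \<Rightarrow> 'x bfun" where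
  "gsubst l z w = (\<lambda>u. (w u \<and> cof1 l z True u) \<or> (\<not> w u \<and> cof1 l z False u))"

definition gderiv :: "'x \<Rightarrow> 'x game \<Rightarrow> 'x game" where
  "gderiv x v = (\<lambda>S. v (insert x S) - v (S - {x}))"

definition bound_cg :: "('x::finite) cgm \<Rightarrow> bool" where
  "bound_cg \<tau> \<longleftrightarrow> (\<forall>f x S. 0 \<le> gderiv x (\<tau> f) S \<and> gderiv x (\<tau> f) S \<le> 1)"

definition dum_cg :: "('x::finite) cgm \<Rightarrow> bool" where
  "dum_cg \<tau> \<longleftrightarrow> (\<forall>f x. x \<notin> dep f \<longrightarrow> (\<forall>S. gderiv x (\<tau> f) S = 0))"

definition dic_cg :: "('x::finite) cgm \<Rightarrow> bool" where
  "dic_cg \<tau> \<longleftrightarrow> (\<forall>x S. gderiv x (\<tau> (var x)) S = 1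
                      \<and> gderiv x (\<tau> (\<lambda>u. \<not> var x u)) S = 1)"

definition type_cg :: "('x::finite) cgm \<Rightarrow> bool" where
  "type_cg \<tau> \<longleftrightarrow> (\<forall>f \<sigma> y S. bij \<sigma> \<longrightarrow>
      \<tau> f S = \<tau> (perm_bfun \<sigma> f) (\<sigma> ` S) \<and> \<tau> f S = \<tau> (flip_bfun y f) S)"

definition modec_cg :: "('x::finite) cgm \<Rightarrow> bool" where
  "modec_cg \<tau> \<longleftrightarrow> (\<forall>f h g lf zf lh zh x.
      mono_modular_via f g lf zf \<and> mono_modular_via h g lh zh \<and>
      bge (cof1 lf zf True) (cof1 lh zh True) \<and>
      bge (cof1 lh zh False) (cof1 lf zf False) \<and>
      x \<in> dep g \<longrightarrow> (\<forall>S. gderiv x (\<tau> f) S \<ge> gderiv x (\<tau> h) S))"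

definition unbiased :: "('x::finite) cgm \<Rightarrow> bool" where
  "unbiased \<tau> \<longleftrightarrow> (\<forall>g. \<tau> g = \<tau> (\<lambda>u. \<not> g u))"

text \<open>Chain-rule decomposability; "for a variable x_g \<notin> dep f" read as: for any such variable.\<close>
definition chain_rule_decomposable :: "('x::finite) cgm \<Rightarrow> bool" where
  "chain_rule_decomposable \<tau> \<longleftrightarrow> (\<forall>f g l z x xg.
      modular_via f g l z \<and> x \<in> dep g \<and> xg \<notin> dep f \<longrightarrow>
      (\<forall>S. gderiv x (\<tau> f) S
            = gderiv x (\<tau> g) S * gderiv xg (\<tau> (gsubst l z (var xg))) S))"

definition constancy_measure :: "(real \<Rightarrow> real) \<Rightarrow> bool" where
  "constancy_measure \<kappa> \<longleftrightarrow> (\<forall>a\<in>{0..1}. \<kappa> a \<in> {0..1}) \<and> convex_on {0..1} \<kappa>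
     \<and> \<kappa> 0 = 1 \<and> (\<forall>a\<in>{0..1}. \<kappa> a = \<kappa> (1 - a)) \<and> \<kappa> (1/2) = 0"

definition kappa_quad :: "real \<Rightarrow> real" where
  "kappa_quad a = 4 * (a - 1/2)^2"

definition Hk :: "(real \<Rightarrow> real) \<Rightarrow> ('x::finite) cgm" where
  "Hk \<kappa> f S = avg (assignments S) (\<lambda>a. \<kappa> (expect (cofactor f S a)))"

end

theory Submission
  imports Defs
begin

text \<open>
  Removing a variable \<open>x\<close> from \<open>S\<close> replaces each conditional
  expectation by the mean of the two obtained by fixing \<open>x\<close>, so convexity of \<open>\<kappa>\<close> makes
  \<open>H\<^sup>\<kappa>\<^sub>f\<close> monotone, which together with \<open>0 \<le> \<kappa> \<le> 1\<close> gives the bounds on its derivatives;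
  unbiasedness, dictators, dummies and type invariance are symmetries of the uniform distribution.

  For \<open>\<kappa>\<^sub>q\<^sub>u\<^sub>a\<^sub>d\<close>, \<open>H\<^sub>f(S)\<close> is the squared \<open>L\<^sup>2\<close> norm of the conditional expectation of the
  \<open>\<plusminus>1\<close> encoding of \<open>f\<close>. If \<open>f = \<ell>[z/g]\<close>, the encoding of \<open>f\<close> is \<open>G M + K\<close> with \<open>G\<close> the
  encoding of \<open>g\<close> and \<open>M, K\<close> built from \<open>\<ell>\<^sub>z\<^sub>/\<^sub>1, \<ell>\<^sub>z\<^sub>/\<^sub>0\<close>, which do not depend on
  the variables of \<open>g\<close>. By independence the norm factorises, and the only part that varies with
  a variable \<open>x\<close> of \<open>g\<close> is \<open>H\<^sub>g(S) \<cdot> \<parallel>\<bbbE>[M | S]\<parallel>\<^sup>2\<close>. So \<open>\<partial>\<^sub>x H\<^sub>f = \<partial>\<^sub>x H\<^sub>g \<cdot> \<parallel>\<bbbE>[M | S]\<parallel>\<^sup>2\<close>;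
  taking \<open>g\<close> to be a fresh variable identifies the second factor as the derivative in the chain
  rule, and \<open>\<parallel>\<bbbE>[M | S]\<parallel>\<^sup>2\<close> is monotone in \<open>M \<ge> 0\<close>, which gives (ModEC).
\<close>

section \<open>Uniform averages over assignments\<close>

lemma avg_add: "avg A (\<lambda>u. \<phi> u + \<psi> u) = avg A \<phi> + avg A \<psi>"
  by (simp add: avg_def sum.distrib add_divide_distrib)

lemma avg_diff: "avg A (\<lambda>u. \<phi> u - \<psi> u) = avg A \<phi> - avg A \<psi>"
  by (simp add: avg_def sum_subtractf diff_divide_distrib)

lemma avg_cmult: "avg A (\<lambda>u. c * \<phi> u) = c * avg A \<phi>"
  by (simp add: avg_def sum_distrib_left)

lemma avg_multc: "avg A (\<lambda>u. \<phi> u * c) = avg A \<phi> * c"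
  by (simp add: avg_def sum_distrib_right)

lemma avg_divide_const: "avg A (\<lambda>u. \<phi> u / c) = avg A \<phi> / c"
  by (simp add: avg_def sum_divide_distrib[symmetric] mult.commute)

lemma avg_mono: "(\<And>u. u \<in> A \<Longrightarrow> \<phi> u \<le> \<psi> u) \<Longrightarrow> avg A \<phi> \<le> avg A \<psi>"
  unfolding avg_def by (intro divide_right_mono sum_mono) auto

lemma avg_const: "finite A \<Longrightarrow> A \<noteq> {} \<Longrightarrow> avg A (\<lambda>_. c) = c"
  by (simp add: avg_def)

lemma avg_const_UNIV [simp]: "avg (UNIV :: 'a::finite set) (\<lambda>_. c) = c"
  by (simp add: avg_const)

lemma avg_in_interval:
  assumes "finite A" "A \<noteq> {}" "\<And>u. u \<in> A \<Longrightarrow> \<phi> u \<in> {a..b}"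
  shows "avg A \<phi> \<in> {a..b}"
  using avg_mono[of A "\<lambda>_. a" \<phi>] avg_mono[of A \<phi> "\<lambda>_. b"] assms by (auto simp: avg_const)

lemma avg_reindex_bij:
  fixes p :: "'a \<Rightarrow> 'a"
  shows "bij p \<Longrightarrow> avg UNIV (\<lambda>v. h (p v)) = avg UNIV h"
  unfolding avg_def using sum.reindex_bij_betw[of p UNIV UNIV h] by simp

lemma bij_flip_upd: "bij (\<lambda>v :: 'x \<Rightarrow> bool. v(y := \<not> v y))"
  by (rule involuntory_imp_bij) simp

lemma bij_precomp: "bij \<sigma> \<Longrightarrow> bij (\<lambda>v :: 'x \<Rightarrow> 'b. v \<circ> \<sigma>)"
  by (rule o_bij[where g = "\<lambda>v. v \<circ> inv \<sigma>"])
     (auto simp: fun_eq_iff bij_is_inj bij_is_surj inv_f_f surj_f_inv_f)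

lemma avg_split_var:
  fixes h :: "('x \<Rightarrow> bool) \<Rightarrow> real"
  shows "avg UNIV h = (avg UNIV (\<lambda>v. h (v(x := True))) + avg UNIV (\<lambda>v. h (v(x := False)))) / 2"
proof -
  have "h (v(x := True)) + h (v(x := False)) = h v + h (v(x := \<not> v x))" for v
    by (cases "v x") (simp_all add: fun_upd_idem)
  then have "avg UNIV (\<lambda>v. h (v(x := True))) + avg UNIV (\<lambda>v. h (v(x := False)))
             = avg UNIV h + avg UNIV (\<lambda>v. h (v(x := \<not> v x)))"
    by (simp add: avg_add[symmetric])
  then show ?thesis
    by (simp add: avg_reindex_bij[OF bij_flip_upd])
qed

definition cond_avg :: "'x set \<Rightarrow> (('x \<Rightarrow> bool) \<Rightarrow> real) \<Rightarrow> ('x \<Rightarrow> bool) \<Rightarrow> real" where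
  "cond_avg S \<Phi> u = avg UNIV (\<lambda>v. \<Phi> (override_on v u S))"

lemma avg_cond_avg:
  fixes \<Phi> :: "('x::finite \<Rightarrow> bool) \<Rightarrow> real"
  shows "avg UNIV (cond_avg S \<Phi>) = avg UNIV \<Phi>"
proof -
  let ?U = "UNIV :: ('x \<Rightarrow> bool) set"
  have swap: "bij (\<lambda>(u, v). (override_on v u S, override_on u v S) :: ('x \<Rightarrow> bool) \<times> ('x \<Rightarrow> bool))"
    by (rule involuntory_imp_bij) (auto simp: override_on_def fun_eq_iff)
  have "(\<Sum>u\<in>?U. \<Sum>v\<in>?U. \<Phi> (override_on v u S)) = (\<Sum>(u, v)\<in>?U \<times> ?U. \<Phi> (override_on v u S))"
    by (simp add: sum.cartesian_product)
  also have "\<dots> = (\<Sum>(u, v)\<in>?U \<times> ?U. \<Phi> u)"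
    using sum.reindex_bij_betw[OF swap, of "\<lambda>(u, v). \<Phi> u"] by (simp add: case_prod_beta)
  also have "\<dots> = (\<Sum>u\<in>?U. \<Sum>v\<in>?U. \<Phi> u)"
    by (rule sum.cartesian_product[symmetric])
  also have "\<dots> = real (card ?U) * (\<Sum>u\<in>?U. \<Phi> u)"
    by (simp add: sum_distrib_left)
  finally show ?thesis
    by (simp add: avg_def cond_avg_def sum_divide_distrib[symmetric])
qed

definition depends_only_on :: "'x set \<Rightarrow> (('x \<Rightarrow> bool) \<Rightarrow> 'b) \<Rightarrow> bool" where
  "depends_only_on A \<phi> \<longleftrightarrow> (\<forall>u u'. (\<forall>y\<in>A. u y = u' y) \<longrightarrow> \<phi> u = \<phi> u')"

lemma depends_only_onD: "depends_only_on A \<phi> \<Longrightarrow> (\<And>y. y \<in> A \<Longrightarrow> u y = u' y) \<Longrightarrow> \<phi> u = \<phi> u'"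
  unfolding depends_only_on_def by blast

lemma depends_only_on_mono: "A \<subseteq> B \<Longrightarrow> depends_only_on A \<phi> \<Longrightarrow> depends_only_on B \<phi>"
  unfolding depends_only_on_def by blast

lemma depends_only_on_const: "depends_only_on A (\<lambda>_. c)"
  unfolding depends_only_on_def by simp

lemma depends_only_on_comp2:
  "depends_only_on A \<phi> \<Longrightarrow> depends_only_on A \<psi> \<Longrightarrow> depends_only_on A (\<lambda>u. F (\<phi> u) (\<psi> u))"
  unfolding depends_only_on_def by metis

lemma depends_only_on_comp:
  "depends_only_on A \<phi> \<Longrightarrow> depends_only_on A (\<lambda>u. F (\<phi> u))"
  using depends_only_on_comp2[of A \<phi> \<phi> "\<lambda>a _. F a"] by simp

lemma depends_only_on_cond_avg:
  fixes \<Phi> :: "('x \<Rightarrow> bool) \<Rightarrow> real"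
  assumes "depends_only_on A \<Phi>"
  shows "depends_only_on A (cond_avg S \<Phi>)"
  unfolding depends_only_on_def
proof (intro allI impI)
  fix u u' :: "'x \<Rightarrow> bool"
  assume "\<forall>y\<in>A. u y = u' y"
  then have "\<Phi> (override_on v u S) = \<Phi> (override_on v u' S)" for v
    by (intro depends_only_onD[OF assms]) (simp add: override_on_def)
  then show "cond_avg S \<Phi> u = cond_avg S \<Phi> u'"
    by (simp add: cond_avg_def)
qed

lemma depends_only_on_override:
  fixes \<Phi> :: "('x \<Rightarrow> bool) \<Rightarrow> real"
  assumes "depends_only_on A \<Phi>"
  shows "depends_only_on A (\<lambda>v. \<Phi> (override_on v u S))"
  using assms unfolding depends_only_on_def override_on_def by simp

lemma avg_mult_independent:
  fixes \<phi> \<psi> :: "('x::finite \<Rightarrow> bool) \<Rightarrow> real"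
  assumes \<phi>: "depends_only_on A \<phi>" and \<psi>: "depends_only_on (- A) \<psi>"
  shows "avg UNIV (\<lambda>u. \<phi> u * \<psi> u) = avg UNIV \<phi> * avg UNIV \<psi>"
proof -
  have "\<phi> (override_on v u A) * \<psi> (override_on v u A) = \<phi> u * \<psi> v" for u v
    using depends_only_onD[OF \<phi>, of "override_on v u A" u]
      depends_only_onD[OF \<psi>, of "override_on v u A" v] by simp
  then have "cond_avg A (\<lambda>u. \<phi> u * \<psi> u) = (\<lambda>u. \<phi> u * avg UNIV \<psi>)"
    by (simp add: cond_avg_def avg_cmult fun_eq_iff)
  then show ?thesis
    using avg_cond_avg[where S = A and \<Phi> = "\<lambda>u. \<phi> u * \<psi> u"]
    by (simp add: avg_multc)
qed

lemma cond_avg_remove: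
  "cond_avg (S - {x}) \<Phi> u
   = (cond_avg (insert x S) \<Phi> (u(x := True)) + cond_avg (insert x S) \<Phi> (u(x := False))) / 2"
proof -
  have "override_on (v(x := c)) u (S - {x}) = override_on v (u(x := c)) (insert x S)" for v c
    by (auto simp: override_on_def fun_eq_iff)
  then show ?thesis
    unfolding cond_avg_def by (subst avg_split_var[where x = x]) simp
qed

lemma cond_avg_restrict:
  assumes "depends_only_on A \<Phi>"
  shows "cond_avg S \<Phi> = cond_avg (S \<inter> A) \<Phi>"
proof
  fix u
  have "\<Phi> (override_on v u S) = \<Phi> (override_on v u (S \<inter> A))" for v
    by (rule depends_only_onD[OF assms]) (simp add: override_on_def)
  then show "cond_avg S \<Phi> u = cond_avg (S \<inter> A) \<Phi> u"
    by (simp add: cond_avg_def)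
qed

lemma avg_assignments:
  fixes \<phi> :: "('x::finite \<Rightarrow> bool) \<Rightarrow> real"
  shows "avg (assignments S) \<phi> = avg UNIV (\<lambda>u. \<phi> (override_on (\<lambda>_. False) u S))"
proof -
  let ?AS = "assignments S" and ?AC = "assignments (- S)"
  define decomp where "decomp u = (override_on (\<lambda>_. False) u S, override_on (\<lambda>_. False) u (- S))"
    for u :: "'x \<Rightarrow> bool"
  have bij: "bij_betw decomp UNIV (?AS \<times> ?AC)"
    by (rule bij_betw_byWitness[where f' = "\<lambda>(a, b). override_on b a S"])
       (auto simp: decomp_def override_on_def assignments_def fun_eq_iff)
  have AC_ne: "?AC \<noteq> {}"
    by (auto simp: assignments_def)
  then have card_AC: "card ?AC > 0"
    by (simp add: card_gt_0_iff)
  have "(\<Sum>u\<in>UNIV. \<phi> (override_on (\<lambda>_. False) u S)) = (\<Sum>(a, b)\<in>?AS \<times> ?AC. \<phi> a)"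
    using sum.reindex_bij_betw[OF bij, of "\<lambda>(a, b). \<phi> a"] by (simp add: decomp_def)
  also have "\<dots> = (\<Sum>a\<in>?AS. \<Sum>b\<in>?AC. \<phi> a)"
    by (rule sum.cartesian_product[symmetric])
  also have "\<dots> = real (card ?AC) * (\<Sum>a\<in>?AS. \<phi> a)"
    by (simp add: sum_distrib_left)
  finally have "(\<Sum>u\<in>UNIV. \<phi> (override_on (\<lambda>_. False) u S)) = real (card ?AC) * (\<Sum>a\<in>?AS. \<phi> a)" .
  moreover have "card (UNIV :: ('x \<Rightarrow> bool) set) = card ?AS * card ?AC"
    using bij_betw_same_card[OF bij] by (simp add: card_cartesian_product)
  ultimately show ?thesis
    using AC_ne card_AC by (simp add: avg_def field_simps)
qed

section \<open>Dependence on variables\<close>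

lemma dep_iff: "x \<in> dep f \<longleftrightarrow> (\<exists>u. f (u(x := True)) \<noteq> f (u(x := False)))"
  by (auto simp: dep_def cof1_def fun_eq_iff)

lemma not_in_dep_upd:
  assumes "x \<notin> dep f"
  shows "f (u(x := c)) = f u"
proof -
  from assms have "f (u(x := True)) = f (u(x := False))"
    by (auto simp: dep_iff)
  then have "f (u(x := c)) = f (u(x := u x))"
    by (cases c; cases "u x") simp_all
  then show ?thesis
    by simp
qed

lemma eq_if_differences_not_in_dep:
  assumes "finite D" and "{y. u y \<noteq> u' y} \<subseteq> D" and "D \<inter> dep f = {}"
  shows "f u = f u'"
  using assms
proof (induction D arbitrary: u rule: finite_induct)
  case empty
  then show ?case
    by (simp add: fun_eq_iff)
next
  case (insert y D)
  then have "f (u(y := u' y)) = f u'"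
    by (intro insert.IH) auto
  moreover have "y \<notin> dep f"
    using insert.prems by auto
  ultimately show ?case
    by (simp add: not_in_dep_upd)
qed

lemma depends_only_on_iff_dep_subset:
  fixes f :: "('x::finite) bfun"
  shows "depends_only_on A f \<longleftrightarrow> dep f \<subseteq> A"
proof
  assume f: "depends_only_on A f"
  show "dep f \<subseteq> A"
  proof
    fix y assume "y \<in> dep f"
    then obtain u where u: "f (u(y := True)) \<noteq> f (u(y := False))"
      by (auto simp: dep_iff)
    show "y \<in> A"
    proof (rule ccontr)
      assume "y \<notin> A"
      then have "f (u(y := True)) = f (u(y := False))"
        by (intro depends_only_onD[OF f]) auto
      with u show False ..
    qed
  qed
next
  assume "dep f \<subseteq> A"
  show "depends_only_on A f"
    unfolding depends_only_on_def
  proof (intro allI impI)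
    fix u u' :: "'x \<Rightarrow> bool"
    assume "\<forall>y\<in>A. u y = u' y"
    with \<open>dep f \<subseteq> A\<close> show "f u = f u'"
      by (intro eq_if_differences_not_in_dep[where D = "- A"]) auto
  qed
qed

lemma dep_cof1_subset: "dep (cof1 l z c) \<subseteq> dep l"
proof
  fix y assume "y \<in> dep (cof1 l z c)"
  then obtain u where u: "l ((u(y := True))(z := c)) \<noteq> l ((u(y := False))(z := c))"
    by (auto simp: dep_iff cof1_def)
  then have "y \<noteq> z"
    by auto
  then have "(u(y := b))(z := c) = (u(z := c))(y := b)" for b
    by (rule fun_upd_twist)
  with u have "l ((u(z := c))(y := True)) \<noteq> l ((u(z := c))(y := False))"
    by simp
  then show "y \<in> dep l"
    by (auto simp: dep_iff)
qed

definition mux :: "'x bfun \<Rightarrow> 'x bfun \<Rightarrow> 'x bfun \<Rightarrow> 'x bfun" where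
  "mux g h\<^sub>1 h\<^sub>0 = (\<lambda>u. if g u then h\<^sub>1 u else h\<^sub>0 u)"

lemma gsubst_eq_mux: "gsubst l z w = mux w (cof1 l z True) (cof1 l z False)"
  by (auto simp: gsubst_def mux_def)

lemma modular_via_mux:
  fixes f g l :: "('x::finite) bfun"
  assumes "modular_via f g l z"
  shows "f = mux g (cof1 l z True) (cof1 l z False)"
    and "depends_only_on (dep g) g"
    and "depends_only_on (- dep g) (cof1 l z c)"
proof -
  from assms have "dep l \<inter> dep g = {}" and f: "f = subst l z g"
    by (simp_all add: modular_via_def)
  show "f = mux g (cof1 l z True) (cof1 l z False)"
    unfolding f by (auto simp: subst_def mux_def)
  show "depends_only_on (dep g) g"
    by (simp add: depends_only_on_iff_dep_subset)
  show "depends_only_on (- dep g) (cof1 l z c)"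
    using \<open>dep l \<inter> dep g = {}\<close> dep_cof1_subset[of l z c]
    by (auto simp: depends_only_on_iff_dep_subset)
qed

lemma dep_mux_then_subset:
  fixes g h\<^sub>1 h\<^sub>0 :: "('x::finite) bfun"
  assumes g: "depends_only_on D g" and h\<^sub>1: "depends_only_on (- D) h\<^sub>1" and "g a"
  shows "dep h\<^sub>1 \<subseteq> dep (mux g h\<^sub>1 h\<^sub>0)"
proof
  fix y assume y: "y \<in> dep h\<^sub>1"
  then obtain u where u: "h\<^sub>1 (u(y := True)) \<noteq> h\<^sub>1 (u(y := False))"
    by (auto simp: dep_iff)
  have "y \<notin> D"
    using y h\<^sub>1 by (auto simp: depends_only_on_iff_dep_subset)
  define w where "w = override_on u a D"
  have "g (w(y := c)) = g a" for c
    using \<open>y \<notin> D\<close> by (intro depends_only_onD[OF g]) (auto simp: w_def)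
  moreover have "h\<^sub>1 (w(y := c)) = h\<^sub>1 (u(y := c))" for c
    by (intro depends_only_onD[OF h\<^sub>1]) (auto simp: w_def override_on_def)
  ultimately have "mux g h\<^sub>1 h\<^sub>0 (w(y := c)) = h\<^sub>1 (u(y := c))" for c
    using \<open>g a\<close> by (simp add: mux_def)
  with u show "y \<in> dep (mux g h\<^sub>1 h\<^sub>0)"
    unfolding dep_iff by metis
qed

lemma dep_mux_branches_subset:
  fixes g h\<^sub>1 h\<^sub>0 :: "('x::finite) bfun"
  assumes "nonconstant g" and g: "depends_only_on D g"
    and h\<^sub>1: "depends_only_on (- D) h\<^sub>1" and h\<^sub>0: "depends_only_on (- D) h\<^sub>0"
  shows "dep h\<^sub>1 \<union> dep h\<^sub>0 \<subseteq> dep (mux g h\<^sub>1 h\<^sub>0)"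
proof -
  obtain u1 u0 where "g u1" "\<not> g u0"
  proof -
    from assms(1) obtain u v where "g u \<noteq> g v"
      by (auto simp: nonconstant_def)
    then show ?thesis
      by (cases "g u") (auto intro: that)
  qed
  have "depends_only_on D (\<lambda>u. \<not> g u)"
    using depends_only_on_comp[OF g, where F = Not] .
  then have "dep h\<^sub>0 \<subseteq> dep (mux (\<lambda>u. \<not> g u) h\<^sub>0 h\<^sub>1)"
    by (rule dep_mux_then_subset[where a = u0, OF _ h\<^sub>0]) (simp add: \<open>\<not> g u0\<close>)
  moreover have "mux (\<lambda>u. \<not> g u) h\<^sub>0 h\<^sub>1 = mux g h\<^sub>1 h\<^sub>0"
    by (auto simp: mux_def)
  ultimately show ?thesis
    using dep_mux_then_subset[OF g h\<^sub>1 \<open>g u1\<close>, where h\<^sub>0 = h\<^sub>0] by simp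
qed

section \<open>The games \<open>H\<^sup>\<kappa>\<close> for an arbitrary constancy measure\<close>

lemma constancy_measureD:
  assumes "constancy_measure \<kappa>"
  shows "\<And>a. a \<in> {0..1} \<Longrightarrow> \<kappa> a \<in> {0..1}" and "convex_on {0..1} \<kappa>"
    and "\<And>a. a \<in> {0..1} \<Longrightarrow> \<kappa> a = \<kappa> (1 - a)"
    and "\<kappa> 0 = 1" and "\<kappa> 1 = 1" and "\<kappa> (1/2) = 0"
proof -
  note cm = assms[unfolded constancy_measure_def]
  show range: "\<And>a. a \<in> {0..1} \<Longrightarrow> \<kappa> a \<in> {0..1}"
    and symmetric: "\<And>a. a \<in> {0..1} \<Longrightarrow> \<kappa> a = \<kappa> (1 - a)"
    and "convex_on {0..1} \<kappa>" and "\<kappa> 0 = 1" and "\<kappa> (1/2) = 0"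
    using cm by blast+
  show "\<kappa> 1 = 1"
    using symmetric[of 0] \<open>\<kappa> 0 = 1\<close> by simp
qed

lemma Hk_eq_avg_cond_avg:
  fixes f :: "('x::finite) bfun"
  shows "Hk \<kappa> f S = avg UNIV (\<lambda>u. \<kappa> (cond_avg S (\<lambda>v. of_bool (f v)) u))"
proof -
  have "override_on v (override_on (\<lambda>_. False) u S) S = override_on v u S" for u v :: "'x \<Rightarrow> bool"
    by (auto simp: override_on_def fun_eq_iff)
  then show ?thesis
    by (simp add: Hk_def avg_assignments expect_def cofactor_def cond_avg_def
        override_on_def[symmetric])
qed

lemma cond_avg_of_bool_range:
  fixes f :: "('x::finite) bfun"
  shows "cond_avg S (\<lambda>v. of_bool (f v)) u \<in> {0..1}"
  unfolding cond_avg_def by (rule avg_in_interval) auto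

lemma Hk_range:
  fixes f :: "('x::finite) bfun"
  assumes "\<And>a. a \<in> {0..1} \<Longrightarrow> \<kappa> a \<in> {0..1}"
  shows "Hk \<kappa> f S \<in> {0..1}"
  unfolding Hk_eq_avg_cond_avg
  using assms cond_avg_of_bool_range by (intro avg_in_interval) auto

lemma convex_on_midpoint:
  fixes \<kappa> :: "real \<Rightarrow> real"
  assumes "convex_on A \<kappa>" "a \<in> A" "b \<in> A"
  shows "\<kappa> ((a + b) / 2) \<le> (\<kappa> a + \<kappa> b) / 2"
  using convex_onD[OF assms(1), of "1/2" a b] assms(2,3) by (simp add: field_simps)

lemma Hk_remove_le_insert:
  fixes f :: "('x::finite) bfun"
  assumes "convex_on {0..1} \<kappa>"
  shows "Hk \<kappa> f (S - {x}) \<le> Hk \<kappa> f (insert x S)"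
proof -
  let ?p = "cond_avg (insert x S) (\<lambda>v. of_bool (f v))"
  have "Hk \<kappa> f (S - {x}) = avg UNIV (\<lambda>u. \<kappa> ((?p (u(x := True)) + ?p (u(x := False))) / 2))"
    unfolding Hk_eq_avg_cond_avg cond_avg_remove ..
  also have "\<dots> \<le> avg UNIV (\<lambda>u. (\<kappa> (?p (u(x := True))) + \<kappa> (?p (u(x := False)))) / 2)"
    by (intro avg_mono convex_on_midpoint[OF assms] cond_avg_of_bool_range)
  also have "\<dots> = avg UNIV (\<lambda>u. \<kappa> (?p u))"
    by (simp only: avg_divide_const avg_add avg_split_var[where x = x and h = "\<lambda>u. \<kappa> (?p u)"])
  also have "\<dots> = Hk \<kappa> f (insert x S)"
    unfolding Hk_eq_avg_cond_avg ..
  finally show ?thesis .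
qed

lemma gderiv_Hk_bounds:
  fixes f :: "('x::finite) bfun"
  assumes "\<And>a. a \<in> {0..1} \<Longrightarrow> \<kappa> a \<in> {0..1}" and "convex_on {0..1} \<kappa>"
  shows "0 \<le> gderiv x (Hk \<kappa> f) S \<and> gderiv x (Hk \<kappa> f) S \<le> 1"
proof -
  have "Hk \<kappa> f T \<in> {0..1}" for T
    using assms(1) by (rule Hk_range)
  from this[of "S - {x}"] this[of "insert x S"] Hk_remove_le_insert[OF assms(2), of f S x]
  show ?thesis
    by (simp add: gderiv_def)
qed

lemma gderiv_Hk_not_in_dep:
  fixes f :: "('x::finite) bfun"
  assumes x: "x \<notin> dep f"
  shows "gderiv x (Hk \<kappa> f) S = 0"
proof -
  have "override_on v u (insert x S) = (override_on v u (S - {x}))(x := u x)" for u v :: "'x \<Rightarrow> bool"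
    by (auto simp: override_on_def fun_eq_iff)
  then have "f (override_on v u (insert x S)) = f (override_on v u (S - {x}))" for u v
    by (simp add: not_in_dep_upd[OF x])
  then show ?thesis
    by (simp add: gderiv_def Hk_eq_avg_cond_avg cond_avg_def)
qed

lemma gderiv_Hk_literal:
  fixes x :: "'x::finite"
  assumes "\<kappa> 0 = 1" "\<kappa> 1 = 1" "\<kappa> (1/2) = 0"
  shows "gderiv x (Hk \<kappa> (\<lambda>u. u x = c)) S = 1"
proof -
  have half: "avg UNIV (\<lambda>v :: 'x \<Rightarrow> bool. of_bool (v x = c)) = 1/2"
    by (subst avg_split_var[where x = x]) simp
  have "Hk \<kappa> (\<lambda>u. u x = c) (S - {x}) = 0"
    by (simp add: Hk_eq_avg_cond_avg cond_avg_def half assms(3))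
  moreover have "\<kappa> (of_bool b) = 1" for b
    using assms by (cases b) simp_all
  then have "Hk \<kappa> (\<lambda>u. u x = c) (insert x S) = 1"
    by (simp add: Hk_eq_avg_cond_avg cond_avg_def)
  ultimately show ?thesis
    by (simp add: gderiv_def)
qed

lemma Hk_Not:
  fixes g :: "('x::finite) bfun"
  assumes "\<And>a. a \<in> {0..1} \<Longrightarrow> \<kappa> a = \<kappa> (1 - a)"
  shows "Hk \<kappa> (\<lambda>u. \<not> g u) = Hk \<kappa> g"
proof
  fix S
  have "cond_avg S (\<lambda>v. of_bool (\<not> g v)) u = 1 - cond_avg S (\<lambda>v. of_bool (g v)) u" for u
    by (simp add: cond_avg_def of_bool_not_iff avg_diff)
  moreover have "\<kappa> (1 - cond_avg S (\<lambda>v. of_bool (g v)) u) = \<kappa> (cond_avg S (\<lambda>v. of_bool (g v)) u)" for u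
    using assms cond_avg_of_bool_range by metis
  ultimately show "Hk \<kappa> (\<lambda>u. \<not> g u) S = Hk \<kappa> g S"
    by (simp add: Hk_eq_avg_cond_avg)
qed

lemma Hk_perm_bfun:
  fixes f :: "('x::finite) bfun"
  assumes "bij \<sigma>"
  shows "Hk \<kappa> (perm_bfun \<sigma> f) (\<sigma> ` S) = Hk \<kappa> f S"
proof -
  have "override_on v u (\<sigma> ` S) \<circ> \<sigma> = override_on (v \<circ> \<sigma>) (u \<circ> \<sigma>) S" for u v :: "'x \<Rightarrow> bool"
    using bij_is_inj[OF assms] by (auto simp: override_on_def fun_eq_iff inj_image_mem_iff)
  then have "cond_avg (\<sigma> ` S) (\<lambda>v. of_bool (perm_bfun \<sigma> f v)) u
             = cond_avg S (\<lambda>v. of_bool (f v)) (u \<circ> \<sigma>)" for u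
    using avg_reindex_bij[OF bij_precomp[OF assms],
        where h = "\<lambda>v. of_bool (f (override_on v (u \<circ> \<sigma>) S))"]
    by (simp add: cond_avg_def perm_bfun_def)
  then show ?thesis
    using avg_reindex_bij[OF bij_precomp[OF assms],
        where h = "\<lambda>u. \<kappa> (cond_avg S (\<lambda>v. of_bool (f v)) u)"]
    by (simp add: Hk_eq_avg_cond_avg)
qed

lemma Hk_flip_bfun:
  fixes f :: "('x::finite) bfun"
  shows "Hk \<kappa> (flip_bfun y f) S = Hk \<kappa> f S"
proof (cases "y \<in> S")
  case True
  then have "(override_on v u S)(y := \<not> override_on v u S y) = override_on v (u(y := \<not> u y)) S" for u v
    by (auto simp: override_on_def fun_eq_iff)
  then have "cond_avg S (\<lambda>v. of_bool (flip_bfun y f v)) u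
             = cond_avg S (\<lambda>v. of_bool (f v)) (u(y := \<not> u y))" for u
    by (simp add: cond_avg_def flip_bfun_def)
  then show ?thesis
    using avg_reindex_bij[OF bij_flip_upd, where h = "\<lambda>u. \<kappa> (cond_avg S (\<lambda>v. of_bool (f v)) u)"]
    by (simp add: Hk_eq_avg_cond_avg)
next
  case False
  then have "(override_on v u S)(y := \<not> override_on v u S y) = override_on (v(y := \<not> v y)) u S" for u v
    by (auto simp: override_on_def fun_eq_iff)
  then have "cond_avg S (\<lambda>v. of_bool (flip_bfun y f v)) u = cond_avg S (\<lambda>v. of_bool (f v)) u" for u
    using avg_reindex_bij[OF bij_flip_upd, where h = "\<lambda>v. of_bool (f (override_on v u S))"]
    by (simp add: cond_avg_def flip_bfun_def)
  then show ?thesis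
    by (simp add: Hk_eq_avg_cond_avg)
qed

section \<open>The quadratic constancy measure\<close>

lemma constancy_measure_kappa_quad: "constancy_measure kappa_quad"
proof -
  have range: "kappa_quad a \<in> {0..1}" if "a \<in> {0..1}" for a
  proof -
    have "kappa_quad a = 1 - 4 * (a * (1 - a))"
      by (simp add: kappa_quad_def power2_eq_square algebra_simps)
    moreover have "0 \<le> a * (1 - a)" "0 \<le> kappa_quad a"
      using that by (simp_all add: kappa_quad_def)
    ultimately show ?thesis
      unfolding atLeastAtMost_iff by linarith
  qed
  have "convex_on {0..1} kappa_quad"
  proof (rule convex_onI)
    fix t a b :: real
    assume "0 < t" "t < 1"
    have "(1 - t) * kappa_quad a + t * kappa_quad b - kappa_quad ((1 - t) *\<^sub>R a + t *\<^sub>R b)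
          = 4 * (t * (1 - t)) * (a - b)\<^sup>2"
      by (simp add: kappa_quad_def power2_eq_square algebra_simps)
    moreover have "0 \<le> 4 * (t * (1 - t)) * (a - b)\<^sup>2"
      using \<open>0 < t\<close> \<open>t < 1\<close> by simp
    ultimately show "kappa_quad ((1 - t) *\<^sub>R a + t *\<^sub>R b) \<le> (1 - t) * kappa_quad a + t * kappa_quad b"
      by linarith
  qed simp
  with range show ?thesis
    by (simp add: constancy_measure_def kappa_quad_def power2_eq_square algebra_simps)
qed

text \<open>The \<open>\<plusminus>1\<close> encoding of a Boolean function, in which
  \<open>\<kappa>\<^sub>q\<^sub>u\<^sub>a\<^sub>d(\<bbbE>[f]) = \<bbbE>[signed f]\<^sup>2\<close>.\<close>

definition signed :: "'x bfun \<Rightarrow> ('x \<Rightarrow> bool) \<Rightarrow> real" where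
  "signed f = (\<lambda>u. 2 * of_bool (f u) - 1)"

definition cond_inner :: "'x set \<Rightarrow> (('x \<Rightarrow> bool) \<Rightarrow> real) \<Rightarrow> (('x \<Rightarrow> bool) \<Rightarrow> real) \<Rightarrow> real" where
  "cond_inner S \<Phi> \<Psi> = avg UNIV (\<lambda>u. cond_avg S \<Phi> u * cond_avg S \<Psi> u)"

lemma Hk_kappa_quad_eq:
  fixes f :: "('x::finite) bfun"
  shows "Hk kappa_quad f S = cond_inner S (signed f) (signed f)"
proof -
  have signed_avg: "cond_avg S (signed f) u = 2 * cond_avg S (\<lambda>v. of_bool (f v)) u - 1" for u
    by (simp add: cond_avg_def signed_def avg_diff avg_cmult)
  have "kappa_quad (cond_avg S (\<lambda>v. of_bool (f v)) u)
        = cond_avg S (signed f) u * cond_avg S (signed f) u" for u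
    by (simp add: signed_avg kappa_quad_def power2_eq_square algebra_simps)
  then show ?thesis
    by (simp add: Hk_eq_avg_cond_avg cond_inner_def)
qed

lemma cond_inner_commute: "cond_inner S \<Phi> \<Psi> = cond_inner S \<Psi> \<Phi>"
  by (simp add: cond_inner_def mult.commute)

lemma cond_inner_add_left:
  "cond_inner S (\<lambda>u. \<Phi>\<^sub>1 u + \<Phi>\<^sub>2 u) \<Psi> = cond_inner S \<Phi>\<^sub>1 \<Psi> + cond_inner S \<Phi>\<^sub>2 \<Psi>"
  by (simp add: cond_inner_def cond_avg_def avg_add distrib_right)

lemma cond_inner_add_right:
  "cond_inner S \<Psi> (\<lambda>u. \<Phi>\<^sub>1 u + \<Phi>\<^sub>2 u) = cond_inner S \<Psi> \<Phi>\<^sub>1 + cond_inner S \<Psi> \<Phi>\<^sub>2"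
  by (simp add: cond_inner_def cond_avg_def avg_add distrib_left)

lemma cond_inner_one_right:
  fixes \<Phi> :: "('x::finite \<Rightarrow> bool) \<Rightarrow> real"
  shows "cond_inner S \<Phi> (\<lambda>_. 1) = avg UNIV \<Phi>"
proof -
  have "cond_avg S (\<lambda>_. 1) u = 1" for u
    by (simp add: cond_avg_def)
  then show ?thesis
    by (simp add: cond_inner_def avg_cond_avg)
qed

lemma cond_inner_mult_independent:
  fixes \<Phi> \<Phi>' \<Psi> \<Psi>' :: "('x::finite \<Rightarrow> bool) \<Rightarrow> real"
  assumes \<Phi>: "depends_only_on A \<Phi>" "depends_only_on A \<Phi>'"
    and \<Psi>: "depends_only_on (- A) \<Psi>" "depends_only_on (- A) \<Psi>'"
  shows "cond_inner S (\<lambda>u. \<Phi> u * \<Psi> u) (\<lambda>u. \<Phi>' u * \<Psi>' u) = cond_inner S \<Phi> \<Phi>' * cond_inner S \<Psi> \<Psi>'"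
proof -
  have split: "cond_avg S (\<lambda>u. \<phi> u * \<psi> u) u = cond_avg S \<phi> u * cond_avg S \<psi> u"
    if "depends_only_on A \<phi>" "depends_only_on (- A) \<psi>" for \<phi> \<psi> :: "('x \<Rightarrow> bool) \<Rightarrow> real" and u
    unfolding cond_avg_def using that by (intro avg_mult_independent depends_only_on_override)
  have "cond_inner S (\<lambda>u. \<Phi> u * \<Psi> u) (\<lambda>u. \<Phi>' u * \<Psi>' u)
        = avg UNIV (\<lambda>u. (cond_avg S \<Phi> u * cond_avg S \<Phi>' u) * (cond_avg S \<Psi> u * cond_avg S \<Psi>' u))"
    by (simp add: cond_inner_def split \<Phi> \<Psi> ac_simps)
  also have "\<dots> = cond_inner S \<Phi> \<Phi>' * cond_inner S \<Psi> \<Psi>'"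
    unfolding cond_inner_def
    by (rule avg_mult_independent; rule depends_only_on_comp2[where F = "(*)"];
        rule depends_only_on_cond_avg, fact)
  finally show ?thesis .
qed

lemma cond_inner_restrict:
  assumes "depends_only_on A \<Phi>" "depends_only_on A \<Psi>"
  shows "cond_inner S \<Phi> \<Psi> = cond_inner (S \<inter> A) \<Phi> \<Psi>"
  unfolding cond_inner_def cond_avg_restrict[OF assms(1), of S] cond_avg_restrict[OF assms(2), of S] ..

lemma cond_inner_insert_remove:
  assumes "depends_only_on (- {x}) \<Phi>" "depends_only_on (- {x}) \<Psi>"
  shows "cond_inner (insert x S) \<Phi> \<Psi> = cond_inner S \<Phi> \<Psi>"
    and "cond_inner (S - {x}) \<Phi> \<Psi> = cond_inner S \<Phi> \<Psi>"
proof -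
  have "cond_inner T \<Phi> \<Psi> = cond_inner S \<Phi> \<Psi>" if "T \<inter> - {x} = S \<inter> - {x}" for T
  proof -
    have "cond_inner T \<Phi> \<Psi> = cond_inner (T \<inter> - {x}) \<Phi> \<Psi>"
      by (rule cond_inner_restrict[OF assms])
    also have "\<dots> = cond_inner S \<Phi> \<Psi>"
      unfolding that by (rule cond_inner_restrict[OF assms, symmetric])
    finally show ?thesis .
  qed
  note restrict = this
  show "cond_inner (insert x S) \<Phi> \<Psi> = cond_inner S \<Phi> \<Psi>"
    by (rule restrict) auto
  show "cond_inner (S - {x}) \<Phi> \<Psi> = cond_inner S \<Phi> \<Psi>"
    by (rule restrict) auto
qed

lemma cond_inner_self_mono:
  fixes \<Phi> \<Psi> :: "('x::finite \<Rightarrow> bool) \<Rightarrow> real"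
  assumes "\<And>u. 0 \<le> \<Phi> u" "\<And>u. \<Phi> u \<le> \<Psi> u"
  shows "cond_inner S \<Phi> \<Phi> \<le> cond_inner S \<Psi> \<Psi>"
  unfolding cond_inner_def
proof (rule avg_mono)
  fix u
  have "0 \<le> cond_avg S \<Phi> u" "cond_avg S \<Phi> u \<le> cond_avg S \<Psi> u"
    using avg_mono[of UNIV "\<lambda>_. 0" "\<lambda>v. \<Phi> (override_on v u S)"]
      avg_mono[of UNIV "\<lambda>v. \<Phi> (override_on v u S)" "\<lambda>v. \<Psi> (override_on v u S)"] assms
    by (simp_all add: cond_avg_def)
  then show "cond_avg S \<Phi> u * cond_avg S \<Phi> u \<le> cond_avg S \<Psi> u * cond_avg S \<Psi> u"
    by (intro mult_mono) auto
qed

lemma Hk_kappa_quad_mux: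
  fixes g h\<^sub>1 h\<^sub>0 :: "('x::finite) bfun"
  assumes g: "depends_only_on D g" and h\<^sub>1: "depends_only_on (- D) h\<^sub>1" and h\<^sub>0: "depends_only_on (- D) h\<^sub>0"
  defines "M \<equiv> \<lambda>u. of_bool (h\<^sub>1 u) - of_bool (h\<^sub>0 u)"
    and "K \<equiv> \<lambda>u. of_bool (h\<^sub>1 u) + of_bool (h\<^sub>0 u) - 1"
  shows "Hk kappa_quad (mux g h\<^sub>1 h\<^sub>0) S
         = Hk kappa_quad g S * cond_inner S M M + 2 * avg UNIV (signed g) * cond_inner S M K
           + cond_inner S K K"
proof -
  have encode: "signed (mux g h\<^sub>1 h\<^sub>0) = (\<lambda>u. signed g u * M u + K u)"
    by (auto simp: signed_def mux_def M_def K_def fun_eq_iff)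
  have G: "depends_only_on D (signed g)"
    unfolding signed_def by (rule depends_only_on_comp[OF g])
  have MK: "depends_only_on (- D) M" "depends_only_on (- D) K"
    unfolding M_def K_def by (rule depends_only_on_comp2[OF h\<^sub>1 h\<^sub>0])+
  have GM_GM: "cond_inner S (\<lambda>u. signed g u * M u) (\<lambda>u. signed g u * M u)
               = Hk kappa_quad g S * cond_inner S M M"
    by (simp add: cond_inner_mult_independent[OF G G MK(1) MK(1)] Hk_kappa_quad_eq)
  have GM_K: "cond_inner S (\<lambda>u. signed g u * M u) K = avg UNIV (signed g) * cond_inner S M K"
    using cond_inner_mult_independent[OF G depends_only_on_const[where c = 1] MK, where S = S]
    by (simp add: cond_inner_one_right)
  have "Hk kappa_quad (mux g h\<^sub>1 h\<^sub>0) S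
        = cond_inner S (\<lambda>u. signed g u * M u + K u) (\<lambda>u. signed g u * M u + K u)"
    by (simp add: Hk_kappa_quad_eq encode)
  also have "\<dots> = Hk kappa_quad g S * cond_inner S M M + 2 * avg UNIV (signed g) * cond_inner S M K
                  + cond_inner S K K"
    by (simp add: cond_inner_add_left cond_inner_add_right GM_GM GM_K
        cond_inner_commute[of S K "\<lambda>u. signed g u * M u"])
  finally show ?thesis .
qed

lemma gderiv_Hk_kappa_quad_mux:
  fixes g h\<^sub>1 h\<^sub>0 :: "('x::finite) bfun"
  assumes g: "depends_only_on D g" and h\<^sub>1: "depends_only_on (- D) h\<^sub>1" and h\<^sub>0: "depends_only_on (- D) h\<^sub>0"
    and "x \<in> D"
  defines "M \<equiv> \<lambda>u. of_bool (h\<^sub>1 u) - of_bool (h\<^sub>0 u)"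
  shows "gderiv x (Hk kappa_quad (mux g h\<^sub>1 h\<^sub>0)) S = gderiv x (Hk kappa_quad g) S * cond_inner S M M"
proof -
  define K where "K = (\<lambda>u. of_bool (h\<^sub>1 u) + of_bool (h\<^sub>0 u) - (1::real))"
  have "- D \<subseteq> - {x}"
    using \<open>x \<in> D\<close> by auto
  then have M: "depends_only_on (- {x}) M" and K: "depends_only_on (- {x}) K"
    unfolding M_def K_def by (rule depends_only_on_mono[OF _ depends_only_on_comp2[OF h\<^sub>1 h\<^sub>0]])+
  have "Hk kappa_quad (mux g h\<^sub>1 h\<^sub>0) T
        = Hk kappa_quad g T * cond_inner T M M + 2 * avg UNIV (signed g) * cond_inner T M K
          + cond_inner T K K" for T
    unfolding M_def K_def by (rule Hk_kappa_quad_mux[OF g h\<^sub>1 h\<^sub>0])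
  then show ?thesis
    by (simp add: gderiv_def cond_inner_insert_remove[OF M M] cond_inner_insert_remove[OF M K]
        cond_inner_insert_remove[OF K K] algebra_simps)
qed

lemma chain_rule_Hk_kappa_quad:
  fixes f g l :: "('x::finite) bfun"
  assumes mod: "modular_via f g l z" and x: "x \<in> dep g" and xg: "xg \<notin> dep f"
  shows "gderiv x (Hk kappa_quad f) S
         = gderiv x (Hk kappa_quad g) S * gderiv xg (Hk kappa_quad (gsubst l z (var xg))) S"
proof -
  let ?h\<^sub>1 = "cof1 l z True" and ?h\<^sub>0 = "cof1 l z False"
  let ?M = "\<lambda>u. of_bool (?h\<^sub>1 u) - of_bool (?h\<^sub>0 u) :: real"
  note f_eq = modular_via_mux(1)[OF mod] and g = modular_via_mux(2)[OF mod]
    and h = modular_via_mux(3)[OF mod]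
  have "gderiv x (Hk kappa_quad f) S = gderiv x (Hk kappa_quad g) S * cond_inner S ?M ?M"
    unfolding f_eq by (rule gderiv_Hk_kappa_quad_mux[OF g h h x])
  moreover have "gderiv xg (Hk kappa_quad (gsubst l z (var xg))) S = cond_inner S ?M ?M"
  proof -
    have "nonconstant g"
      using mod by (simp add: modular_via_def)
    then have "dep ?h\<^sub>1 \<union> dep ?h\<^sub>0 \<subseteq> dep f"
      unfolding f_eq by (rule dep_mux_branches_subset[OF _ g h h])
    with xg have "xg \<notin> dep ?h\<^sub>1 \<union> dep ?h\<^sub>0"
      by blast
    then have "depends_only_on (- {xg}) ?h\<^sub>1" "depends_only_on (- {xg}) ?h\<^sub>0"
      by (auto simp: depends_only_on_iff_dep_subset)
    moreover have "depends_only_on {xg} (var xg)"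
      by (simp add: depends_only_on_def var_def)
    ultimately have "gderiv xg (Hk kappa_quad (mux (var xg) ?h\<^sub>1 ?h\<^sub>0)) S
                     = gderiv xg (Hk kappa_quad (var xg)) S * cond_inner S ?M ?M"
      by (intro gderiv_Hk_kappa_quad_mux) auto
    moreover have "gderiv xg (Hk kappa_quad (\<lambda>u. u xg = True)) S = 1"
      by (rule gderiv_Hk_literal[OF constancy_measureD(4-6)[OF constancy_measure_kappa_quad]])
    ultimately show ?thesis
      by (simp add: gsubst_eq_mux var_def)
  qed
  ultimately show ?thesis
    by simp
qed

lemma modec_Hk_kappa_quad:
  fixes f h g lf lh :: "('x::finite) bfun"
  assumes "mono_modular_via f g lf zf" and "mono_modular_via h g lh zh"
    and "bge (cof1 lf zf True) (cof1 lh zh True)"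
    and "bge (cof1 lh zh False) (cof1 lf zf False)"
    and x: "x \<in> dep g"
  shows "gderiv x (Hk kappa_quad h) S \<le> gderiv x (Hk kappa_quad f) S"
proof -
  let ?Mf = "\<lambda>u. of_bool (cof1 lf zf True u) - of_bool (cof1 lf zf False u) :: real"
  let ?Mh = "\<lambda>u. of_bool (cof1 lh zh True u) - of_bool (cof1 lh zh False u) :: real"
  from assms(1,2) have f: "modular_via f g lf zf" and h: "modular_via h g lh zh"
    by (simp_all add: mono_modular_via_def)
  have "gderiv x (Hk kappa_quad f) S = gderiv x (Hk kappa_quad g) S * cond_inner S ?Mf ?Mf"
    unfolding modular_via_mux(1)[OF f]
    by (rule gderiv_Hk_kappa_quad_mux[OF modular_via_mux(2,3,3)[OF f] x])
  moreover have "gderiv x (Hk kappa_quad h) S = gderiv x (Hk kappa_quad g) S * cond_inner S ?Mh ?Mh"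
    unfolding modular_via_mux(1)[OF h]
    by (rule gderiv_Hk_kappa_quad_mux[OF modular_via_mux(2,3,3)[OF h] x])
  moreover have "0 \<le> gderiv x (Hk kappa_quad g) S"
    using gderiv_Hk_bounds[where \<kappa> = kappa_quad, OF constancy_measureD(1,2)[OF constancy_measure_kappa_quad]]
    by blast
  moreover have "cond_inner S ?Mh ?Mh \<le> cond_inner S ?Mf ?Mf"
    using assms(1-4) unfolding mono_modular_via_def monotone_in_def bge_def
    by (intro cond_inner_self_mono) auto
  ultimately show ?thesis
    by (simp add: mult_left_mono)
qed

theorem mainTheorem16:
  fixes \<kappa> :: "real \<Rightarrow> real"
  assumes "constancy_measure \<kappa>"
  shows "unbiased (Hk \<kappa> :: ('x::finite) cgm) \<and> bound_cg (Hk \<kappa> :: 'x cgm)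
         \<and> dic_cg (Hk \<kappa> :: 'x cgm) \<and> dum_cg (Hk \<kappa> :: 'x cgm) \<and> type_cg (Hk \<kappa> :: 'x cgm)
         \<and> chain_rule_decomposable (Hk kappa_quad :: 'x cgm)
         \<and> modec_cg (Hk kappa_quad :: 'x cgm)"
proof (intro conjI)
  note \<kappa> = constancy_measureD[OF assms]
  show "unbiased (Hk \<kappa> :: 'x cgm)"
    unfolding unbiased_def by (intro allI Hk_Not[where \<kappa> = \<kappa>, OF \<kappa>(3), symmetric])
  show "bound_cg (Hk \<kappa> :: 'x cgm)"
    unfolding bound_cg_def by (intro allI gderiv_Hk_bounds[where \<kappa> = \<kappa>, OF \<kappa>(1,2)])
  have literal: "gderiv x (Hk \<kappa> (\<lambda>u. u x = c)) S = 1" for x :: 'x and c S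
    using \<kappa>(4-6) by (rule gderiv_Hk_literal)
  show "dic_cg (Hk \<kappa> :: 'x cgm)"
    unfolding dic_cg_def var_def using literal[where c = True] literal[where c = False] by simp
  show "dum_cg (Hk \<kappa> :: 'x cgm)"
    unfolding dum_cg_def by (intro allI impI gderiv_Hk_not_in_dep)
  show "type_cg (Hk \<kappa> :: 'x cgm)"
    unfolding type_cg_def by (simp add: Hk_perm_bfun Hk_flip_bfun)
  show "chain_rule_decomposable (Hk kappa_quad :: 'x cgm)"
    unfolding chain_rule_decomposable_def
    by (intro allI impI; elim conjE; rule chain_rule_Hk_kappa_quad; assumption)
  show "modec_cg (Hk kappa_quad :: 'x cgm)"
    unfolding modec_cg_def
    by (intro allI impI; elim conjE; rule modec_Hk_kappa_quad; assumption)
qed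

end
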